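(* Let a natural gas network be given by a connected directed graph with node set $\{1,\dots,N\}$ and edge set $\{1,\dots,E\}$ (no self-loops, no parallel edges), with node-edge incidence matrix $A\in\mathbb{R}^{N\times E}$, and let $B\in\mathbb{R}^{N\times E}$, $\gamma_{1}\in\mathbb{R}^{E}$, $\gamma_{2}\in\mathbb{R}^{E\times N}$, $\gamma_{3}\in\mathbb{R}^{E\times E}$, $\delta\in\mathbb{R}^{N}$ be given. Fix a reference node $\mathrm{r}$ and a reference value $\mathring{\pi}_{\mathrm{r}}\in\mathbb{R}$. Define $\hat{\gamma}_{2}=A\gamma_{2}\in\mathbb{R}^{N\times N}$, $\hat{\gamma}_{3}=B+A\gamma_{3}\in\mathbb{R}^{N\times E}$, and assume that the matrix $\hat{\gamma}_{2\backslash\mathrm{r}}$ obtained from $\hat{\gamma}_{2}$ by deleting its $\mathrm{r}$-th row and $\mathrm{r}$-th column is invertible. Let $\breve{\gamma}_{2}\in\mathbb{R}^{N\times N}$ be the matrix whose $\mathrm{r}$-th row and $\mathrm{r}$-th column are zero and whose remaining entries form $\hat{\gamma}_{2\backslash\mathrm{r}}^{-1}$ (i.e., $(\breve{\gamma}_{2})_{ij}=(\hat{\gamma}_{2\backslash\mathrm{r}}^{-1})_{ij}$ for $i,j\neq\mathrm{r}$, indices of the reduced matrix inherited from the original ones). Define $\grave{\gamma}_{2}=\gamma_{2}\breve{\gamma}_{2}\in\mathbb{R}^{E\times N}$ and $\grave{\gamma}_{3}=\gamma_{2}\breve{\gamma}_{2}\hat{\gamma}_{3}-\gamma_{3}\in\mathbb{R}^{E\times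 E}$. Let nominal quantities $\vartheta\in\mathbb{R}^{N}$, $\kappa\in\mathbb{R}^{E}$, $\varphi\in\mathbb{R}^{E}$, $\pi\in\mathbb{R}^{N}$ satisfy $A\varphi=\vartheta-B\kappa-\delta$, $\varphi=\gamma_{1}+\gamma_{2}\pi+\gamma_{3}\kappa$ and $\pi_{\mathrm{r}}=\mathring{\pi}_{\mathrm{r}}$, and let $\alpha\in\mathbb{R}^{N\times N}$, $\beta\in\mathbb{R}^{E\times N}$. Consider the affine control policies $\tilde{\vartheta}(\xi)=\vartheta+\alpha\xi$, $\tilde{\kappa}(\xi)=\kappa+\beta\xi$ and random extractions $\tilde{\delta}(\xi)=\delta+\xi$, $\xi\in\mathbb{R}^{N}$. Suppose functions $\tilde{\pi}:\mathbb{R}^{N}\to\mathbb{R}^{N}$ and $\tilde{\varphi}:\mathbb{R}^{N}\to\mathbb{R}^{E}$ satisfy, for every $\xi\in\mathbb{R}^{N}$, $$A\tilde{\varphi}(\xi)=\tilde{\vartheta}(\xi)-B\tilde{\kappa}(\xi)-\tilde{\delta}(\xi),\qquad \tilde{\varphi}(\xi)=\gamma_{1}+\gamma_{2}\tilde{\pi}(\xi)+\gamma_{3}\tilde{\kappa}(\xi),\qquad \tilde{\pi}_{\mathrm{r}}(\xi)=\mathring{\pi}_{\mathrm{r}}.$$ Then for every $\xi\in\mathbb{R}^{N}$, $$\tilde{\pi}(\xi)=\pi+\breve{\gamma}_{2}(\alpha-\hat{\gamma}_{3}\beta-I_{N})\xi,\qquad \tilde{\varphi}(\xi)=\varphi+\big(\grave{\gamma}_{2}(\alpha-I_{N})-\grave{\gamma}_{3}\beta\big)\xi,$$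 where $I_N$ is the $N\times N$ identity matrix.
   Context: The node-edge incidence matrix is defined by: for each edge $\ell=(n,n')$ directed from sending node $n$ to receiving node $n'$, $A_{n\ell}=+1$, $A_{n'\ell}=-1$, and $A_{k\ell}=0$ for all other nodes $k$. $\vartheta$ are gas injections, $\kappa$ pressure regulation rates of compressors/valves, $\varphi$ gas flow rates, $\pi$ squared nodal pressures, $\delta$ mean gas extractions and $\xi$ the forecast error of extractions. The equation $\varphi=\gamma_{1}+\gamma_{2}\pi+\gamma_{3}\kappa$ is a linearization of the Weymouth gas flow equation around a stationary point; $\gamma_1,\gamma_2,\gamma_3$ are treated as given constants. The matrix $B$ maps pressure regulation of active pipelines to fuel gas extraction at their sending nodes. *)

theory Defs
  imports "HOL-Analysis.Analysis"
begin

definition gas_graph :: "('e::finite \<Rightarrow> 'n::finite) \<Rightarrow> ('e \<Rightarrow> 'n) \<Rightarrow> bool" where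
  "gas_graph src dst \<longleftrightarrow>
     (\<forall>l. src l \<noteq> dst l) \<and>
     inj (\<lambda>l. (src l, dst l)) \<and>
     (\<forall>u v. (\<lambda>x y. \<exists>l. (src l = x \<and> dst l = y) \<or> (src l = y \<and> dst l = x))\<^sup>*\<^sup>* u v)"

definition incidence :: "('e::finite \<Rightarrow> 'n::finite) \<Rightarrow> ('e \<Rightarrow> 'n) \<Rightarrow> real^'e^'n" where
  "incidence src dst = (\<chi> n l. if n = src l then 1 else if n = dst l then -1 else 0)"

text \<open>M, padded with zero r-th row and column, is the inverse of the matrix obtained
  from G by deleting the r-th row and r-th column (indices inherited from G).\<close>
definition reduced_inverse :: "'n::finite \<Rightarrow> real^'n^'n \<Rightarrow> real^'n^'n \<Rightarrow> bool" where
  "reduced_inverse r G M \<longleftrightarrow>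
     (\<forall>j. M$r$j = 0) \<and> (\<forall>i. M$i$r = 0) \<and>
     (\<forall>i j. i \<noteq> r \<longrightarrow> j \<noteq> r \<longrightarrow>
        (\<Sum>k\<in>UNIV - {r}. G$i$k * M$k$j) = (if i = j then 1 else 0) \<and>
        (\<Sum>k\<in>UNIV - {r}. M$i$k * G$k$j) = (if i = j then 1 else 0))"

definition reduced_invertible :: "'n::finite \<Rightarrow> real^'n^'n \<Rightarrow> bool" where
  "reduced_invertible r G \<longleftrightarrow> (\<exists>M. reduced_inverse r G M)"

definition breve :: "'n::finite \<Rightarrow> real^'n^'n \<Rightarrow> real^'n^'n" where
  "breve r G = (THE M. reduced_inverse r G M)"

end

theory Submission
  imports Defs
begin

text \<open>Subtracting the nominal operating point from the perturbed one, the affine terms cancel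
  and the pressure deviation \<open>d = \<pi>t \<xi> - \<pi>\<close> solves the linear system
  \<open>\<gamma>2h *v d = (\<alpha> - \<gamma>3h ** \<beta> - mat 1) *v \<xi>\<close>. Both pressures take the reference value at
  node r, so \<open>d $ r = 0\<close>: only the reduced matrix acts on d, and its zero-padded inverse
  recovers d. The flow deviation then follows from the linearised Weymouth equation.\<close>

lemma matrix_vector_mult_nth_remove:
  fixes G :: "real^'n::finite^'m" and d :: "real^'n"
  shows "(G *v d) $ i = (\<Sum>k\<in>UNIV - {r}. G $ i $ k * d $ k) + G $ i $ r * d $ r"
  using sum.remove[of UNIV r "\<lambda>k. G $ i $ k * d $ k"]
  by (simp add: matrix_vector_mult_def)

lemma reduced_inverse_left_cancel:
  assumes M: "reduced_inverse r G M" and d: "d $ r = 0"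
  shows "M *v (G *v d) = d"
proof -
  have "(M *v (G *v d)) $ j = d $ j" for j
  proof (cases "j = r")
    case True
    then show ?thesis using M d by (simp add: reduced_inverse_def matrix_vector_mult_def)
  next
    case False
    have "(M *v (G *v d)) $ j = (\<Sum>i\<in>UNIV - {r}. M $ j $ i * (G *v d) $ i)"
      using M unfolding reduced_inverse_def by (subst matrix_vector_mult_nth_remove[where r = r]) simp
    also have "\<dots> = (\<Sum>i\<in>UNIV - {r}. M $ j $ i * (\<Sum>k\<in>UNIV - {r}. G $ i $ k * d $ k))"
      using d by (simp add: matrix_vector_mult_nth_remove[where r = r])
    also have "\<dots> = (\<Sum>k\<in>UNIV - {r}. (\<Sum>i\<in>UNIV - {r}. M $ j $ i * G $ i $ k) * d $ k)"
      by (simp add: sum_distrib_left sum_distrib_right mult.assoc) (rule sum.swap)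
    also have "\<dots> = (\<Sum>k\<in>UNIV - {r}. if k = j then d $ k else 0)"
      using M False unfolding reduced_inverse_def by (intro sum.cong) auto
    also have "\<dots> = d $ j" using False by simp
    finally show ?thesis .
  qed
  then show ?thesis by (simp add: vec_eq_iff)
qed

lemma reduced_inverse_unique:
  assumes M: "reduced_inverse r G M" and M': "reduced_inverse r G M'"
  shows "M = M'"
proof -
  have "M' $ i $ j = M $ i $ j" for i j
  proof (cases "i = r \<or> j = r")
    case True
    then show ?thesis using M M' unfolding reduced_inverse_def by auto
  next
    case False
    have "M' $ i $ j = (\<Sum>k\<in>UNIV - {r}. M' $ i $ k * (if k = j then 1 else 0))"
      using False by (simp add: if_distrib cong: if_cong)
    also have "\<dots> = (\<Sum>k\<in>UNIV - {r}. M' $ i $ k * (\<Sum>l\<in>UNIV - {r}. G $ k $ l * M $ l $ j))"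
      using M False unfolding reduced_inverse_def by (intro sum.cong) auto
    also have "\<dots> = (\<Sum>l\<in>UNIV - {r}. (\<Sum>k\<in>UNIV - {r}. M' $ i $ k * G $ k $ l) * M $ l $ j)"
      by (simp add: sum_distrib_left sum_distrib_right mult.assoc) (rule sum.swap)
    also have "\<dots> = (\<Sum>l\<in>UNIV - {r}. if l = i then M $ l $ j else 0)"
      using M' False unfolding reduced_inverse_def by (intro sum.cong) auto
    also have "\<dots> = M $ i $ j" using False by simp
    finally show ?thesis .
  qed
  then show ?thesis by (simp add: vec_eq_iff)
qed

lemma reduced_inverse_breve:
  assumes "reduced_invertible r G"
  shows "reduced_inverse r G (breve r G)"
  using assms theI[where P = "reduced_inverse r G"] reduced_inverse_unique
  unfolding reduced_invertible_def breve_def by blast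

lemmas matrix_vector_linear_simps = matrix_vector_mul_assoc[symmetric]
  matrix_vector_mult_add_rdistrib matrix_vector_mult_diff_rdistrib
  matrix_vector_right_distrib matrix_vector_mult_diff_distrib

lemma linearised_network_deviation:
  fixes A B :: "real^'e::finite^'n::finite" and \<gamma>2 :: "real^'n^'e" and \<gamma>3 :: "real^'e^'e"
  assumes "A *v \<phi> = \<theta> - B *v \<kappa> - \<delta>" and "\<phi> = \<gamma>1 + \<gamma>2 *v \<pi> + \<gamma>3 *v \<kappa>"
    and "A *v \<phi>' = \<theta>' - B *v \<kappa>' - \<delta>'" and "\<phi>' = \<gamma>1 + \<gamma>2 *v \<pi>' + \<gamma>3 *v \<kappa>'"
  shows "(A ** \<gamma>2) *v (\<pi>' - \<pi>) = (\<theta>' - \<theta>) - (B + A ** \<gamma>3) *v (\<kappa>' - \<kappa>) - (\<delta>' - \<delta>)"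
proof -
  have "A *v (\<phi>' - \<phi>) = (\<theta>' - \<theta>) - B *v (\<kappa>' - \<kappa>) - (\<delta>' - \<delta>)"
    using assms(1,3) by (simp add: matrix_vector_linear_simps)
  moreover have "\<phi>' - \<phi> = \<gamma>2 *v (\<pi>' - \<pi>) + \<gamma>3 *v (\<kappa>' - \<kappa>)"
    using assms(2,4) by (simp add: matrix_vector_linear_simps)
  ultimately show ?thesis
    by (simp add: matrix_vector_linear_simps algebra_simps)
qed

theorem lemma1:
  fixes src dst :: "'e::finite \<Rightarrow> 'n::finite"
    and B :: "real^'e^'n" and \<gamma>1 :: "real^'e" and \<gamma>2 :: "real^'n^'e"
    and \<gamma>3 :: "real^'e^'e" and \<delta> :: "real^'n"
    and r :: 'n and \<pi>r :: real
    and \<theta> :: "real^'n" and \<kappa> :: "real^'e" and \<phi> :: "real^'e" and \<pi> :: "real^'n"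
    and \<alpha> :: "real^'n^'n" and \<beta> :: "real^'n^'e"
    and \<pi>t :: "real^'n \<Rightarrow> real^'n" and \<phi>t :: "real^'n \<Rightarrow> real^'e"
  defines "A \<equiv> incidence src dst"
  defines "\<gamma>2h \<equiv> A ** \<gamma>2"
  defines "\<gamma>3h \<equiv> B + A ** \<gamma>3"
  defines "\<gamma>2b \<equiv> breve r \<gamma>2h"
  defines "\<gamma>2g \<equiv> \<gamma>2 ** \<gamma>2b"
  defines "\<gamma>3g \<equiv> \<gamma>2 ** \<gamma>2b ** \<gamma>3h - \<gamma>3"
  assumes graph: "gas_graph src dst"
    and inv: "reduced_invertible r \<gamma>2h"
    and nom1: "A *v \<phi> = \<theta> - B *v \<kappa> - \<delta>"
    and nom2: "\<phi> = \<gamma>1 + \<gamma>2 *v \<pi> + \<gamma>3 *v \<kappa>"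
    and nom3: "\<pi> $ r = \<pi>r"
    and pol1: "\<And>\<xi>. A *v \<phi>t \<xi> = (\<theta> + \<alpha> *v \<xi>) - B *v (\<kappa> + \<beta> *v \<xi>) - (\<delta> + \<xi>)"
    and pol2: "\<And>\<xi>. \<phi>t \<xi> = \<gamma>1 + \<gamma>2 *v \<pi>t \<xi> + \<gamma>3 *v (\<kappa> + \<beta> *v \<xi>)"
    and pol3: "\<And>\<xi>. \<pi>t \<xi> $ r = \<pi>r"
  shows "\<forall>\<xi>. \<pi>t \<xi> = \<pi> + \<gamma>2b *v ((\<alpha> - \<gamma>3h ** \<beta> - mat 1) *v \<xi>) \<and>
              \<phi>t \<xi> = \<phi> + (\<gamma>2g ** (\<alpha> - mat 1) - \<gamma>3g ** \<beta>) *v \<xi>"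
proof (intro allI conjI)
  fix \<xi>
  have "\<gamma>2h *v (\<pi>t \<xi> - \<pi>) = (\<alpha> - \<gamma>3h ** \<beta> - mat 1) *v \<xi>"
    using linearised_network_deviation[OF nom1 nom2 pol1 pol2, of \<xi>]
    by (simp add: \<gamma>2h_def \<gamma>3h_def matrix_vector_linear_simps)
  moreover have "(\<pi>t \<xi> - \<pi>) $ r = 0"
    using pol3 nom3 by simp
  ultimately have pressure: "\<gamma>2b *v ((\<alpha> - \<gamma>3h ** \<beta> - mat 1) *v \<xi>) = \<pi>t \<xi> - \<pi>"
    using reduced_inverse_left_cancel[OF reduced_inverse_breve[OF inv]]
    unfolding \<gamma>2b_def by metis
  then show "\<pi>t \<xi> = \<pi> + \<gamma>2b *v ((\<alpha> - \<gamma>3h ** \<beta> - mat 1) *v \<xi>)"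
    by simp
  have "\<phi>t \<xi> = \<phi> + \<gamma>2 *v (\<pi>t \<xi> - \<pi>) + \<gamma>3 *v (\<beta> *v \<xi>)"
    using pol2[of \<xi>] nom2 by (simp add: algebra_simps matrix_vector_linear_simps)
  then show "\<phi>t \<xi> = \<phi> + (\<gamma>2g ** (\<alpha> - mat 1) - \<gamma>3g ** \<beta>) *v \<xi>"
    unfolding pressure[symmetric] \<gamma>2g_def \<gamma>3g_def by (simp add: matrix_vector_linear_simps)
qed

end
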